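(* Let $c_*=\frac{9e}{4\sqrt2\pi}$ and $0\leq\varepsilon<1$. Then for all real $t$ with $|t|>4e$, $$\left|\frac{\Gamma(1+it+\varepsilon)}{\Gamma(1+it/2+\varepsilon)^2}\right|\leq\frac{c_*}{|t|^{1/2}}.$$ Moreover, for real $t\neq0$, $$\left|\frac{\Gamma(1+it)}{\Gamma(1+it/2)^2}\right|^2=\frac{2}{\pi}\frac{1}{t}\tanh(\pi t/2).$$
   Context: $\Gamma$ denotes Euler's gamma function. *)

theory Defs
  imports "HOL-Analysis.Analysis"
begin

definition c_star :: real where
  "c_star = 9 * exp 1 / (4 * sqrt 2 * pi)"

end

theory Submission
  imports Defs
begin

(* Write R(x, t) = |Gamma(x + i t)|^2 / |Gamma(x + i t/2)|^4. By Euler's product for Gamma,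
   R(x, t) Gamma(x)^2 is the limit of the products over k <= n of
   euler_factor (t^2) ((x + k)^2) / 16. The function euler_factor T decreases on (0, T/2],
   increases on [T/2, oo) and takes values in [12, 16] there; as the points (x + k)^2 with
   1 <= x <= 2 interleave the points (1 + k)^2, the product at x exceeds the one at 1 by a factor
   at most 16/12. At x = 1 the reflection formula gives R(1, t) = (2/pi) tanh(pi t/2) / t,
   which is at most 2/(pi |t|), and log-convexity gives Gamma >= e^(-1/4) on [1, 2]. Hence
   R(x, t) <= 8 e^(1/2) / (3 pi |t|) <= c_star^2 / |t| for every t <> 0. *)

(* 16 times the k-th factor ((x+k)^2 + t^2/4)^2 / ((x+k)^2 ((x+k)^2 + t^2)) of the Euler
   product for |Gamma(x + i t)|^2 Gamma(x)^2 / |Gamma(x + i t/2)|^4, with T = t^2, w = (x+k)^2. *)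
definition euler_factor :: "real \<Rightarrow> real \<Rightarrow> real" where
  "euler_factor T w = (4 * w + T)\<^sup>2 / (w * (w + T))"

(* The largest nondecreasing minorant of euler_factor T, which attains its minimum 12 at T/2. *)
definition euler_factor_env :: "real \<Rightarrow> real \<Rightarrow> real" where
  "euler_factor_env T w = euler_factor T (max w (T / 2))"

lemma euler_factor_pos: "T > 0 \<Longrightarrow> w > 0 \<Longrightarrow> euler_factor T w > 0"
  unfolding euler_factor_def by (auto intro!: divide_pos_pos)

lemma euler_factor_ge_12:
  assumes "T > 0" "w > 0"
  shows "12 \<le> euler_factor T w"
proof -
  have "12 * (w * (w + T)) \<le> (4 * w + T)\<^sup>2"
    using zero_le_power2[of "2 * w - T"] by (simp add: power2_eq_square algebra_simps)
  then show ?thesis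
    unfolding euler_factor_def using assms by (simp add: pos_le_divide_eq)
qed

lemma euler_factor_le_16:
  assumes "T > 0" "T / 2 \<le> w"
  shows "euler_factor T w \<le> 16"
proof -
  have "T * T \<le> 8 * w * T"
    using assms by (simp add: mult_right_mono)
  then have "(4 * w + T)\<^sup>2 \<le> 16 * (w * (w + T))"
    by (simp add: power2_eq_square algebra_simps)
  then show ?thesis
    unfolding euler_factor_def using assms by (simp add: pos_divide_le_eq)
qed

lemma euler_factor_le_iff:
  assumes "T > 0" "a > 0" "b > 0"
  shows "euler_factor T a \<le> euler_factor T b \<longleftrightarrow> 0 \<le> T * (b - a) * (8 * a * b - (a + b) * T - T * T)"
proof -
  have "T * (b - a) * (8 * a * b - (a + b) * T - T * T) =
        (4 * b + T)\<^sup>2 * (a * (a + T)) - (4 * a + T)\<^sup>2 * (b * (b + T))"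
    by (simp add: power2_eq_square algebra_simps)
  then show ?thesis
    unfolding euler_factor_def using assms by (simp add: divide_simps)
qed

lemma euler_factor_mono:
  assumes "T > 0" "T / 2 \<le> a" "a \<le> b"
  shows "euler_factor T a \<le> euler_factor T b"
proof -
  have "2 * a * T \<le> 4 * a * b" "2 * b * T \<le> 4 * a * b" "T * T \<le> (a + b) * T"
    using assms by (simp_all add: mult_left_mono mult_right_mono)
  then have "0 \<le> 8 * a * b - (a + b) * T - T * T"
    by (simp add: algebra_simps)
  then show ?thesis
    using assms by (subst euler_factor_le_iff) auto
qed

lemma euler_factor_antimono:
  assumes "T > 0" "0 < a" "a \<le> b" "b \<le> T / 2"
  shows "euler_factor T b \<le> euler_factor T a"
proof -
  have "8 * a * b \<le> 4 * a * T" "3 * a * T \<le> (b + T) * T"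
    using assms by (simp_all add: mult_left_mono mult_right_mono)
  then have "8 * b * a - (b + a) * T - T * T \<le> 0"
    by (simp add: algebra_simps)
  moreover have "T * (a - b) \<le> 0"
    using assms by (simp add: mult_nonneg_nonpos)
  ultimately have "0 \<le> T * (a - b) * (8 * b * a - (b + a) * T - T * T)"
    by (rule mult_nonpos_nonpos[rotated])
  then show ?thesis
    using assms by (subst euler_factor_le_iff) auto
qed

lemma euler_factor_env_bounds:
  assumes "T > 0"
  shows "12 \<le> euler_factor_env T w" "euler_factor_env T w \<le> 16"
  unfolding euler_factor_env_def
  using assms euler_factor_ge_12[of T "max w (T / 2)"] euler_factor_le_16[of T "max w (T / 2)"]
  by auto

lemma euler_factor_env_mono: "T > 0 \<Longrightarrow> a \<le> b \<Longrightarrow> euler_factor_env T a \<le> euler_factor_env T b"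
  unfolding euler_factor_env_def by (intro euler_factor_mono) auto

lemma euler_factor_div_env_antimono:
  assumes "T > 0" "0 < u" "u \<le> v"
  shows "euler_factor T v * euler_factor_env T u \<le> euler_factor T u * euler_factor_env T v"
proof (cases "T / 2 \<le> u")
  case True
  then show ?thesis
    using assms by (simp add: euler_factor_env_def max_absorb1 mult.commute)
next
  case u_small: False
  show ?thesis
  proof (cases "T / 2 \<le> v")
    case True
    have "euler_factor_env T u = 12"
      using u_small assms
      unfolding euler_factor_env_def euler_factor_def by (simp add: max_def field_simps power2_eq_square)
    moreover have "euler_factor_env T v = euler_factor T v"
      using True by (simp add: euler_factor_env_def)
    ultimately show ?thesis
      using assms euler_factor_ge_12[of T u] euler_factor_pos[of T v] by simp
  next
    case False
    then have "euler_factor_env T u = euler_factor_env T v"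
      using u_small by (simp add: euler_factor_env_def max_def)
    moreover have "euler_factor T v \<le> euler_factor T u"
      using False assms by (intro euler_factor_antimono) auto
    ultimately show ?thesis
      using euler_factor_env_bounds(1)[OF assms(1), of v] by (simp add: mult_right_mono)
  qed
qed

lemma prod_euler_factor_interleaved:
  assumes "T > 0" "\<And>k. 0 < u k" "\<And>k. u k \<le> v k" "\<And>k. v k \<le> u (Suc k)"
  shows "euler_factor_env T (u 0) * (\<Prod>k<N. euler_factor T (v k))
           \<le> euler_factor_env T (u N) * (\<Prod>k<N. euler_factor T (u k))"
proof (induction N)
  case 0
  then show ?case by simp
next
  case (Suc N)
  have pos: "0 \<le> euler_factor T (v N)" "0 \<le> euler_factor T (u N)"
    using assms euler_factor_pos[of T "u N"] euler_factor_pos[of T "v N"] less_le_trans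
    by (metis less_imp_le)+
  have prod_pos: "0 \<le> (\<Prod>k<N. euler_factor T (u k))"
    using assms by (intro prod_nonneg) (simp add: euler_factor_pos less_imp_le)
  have "euler_factor_env T (u 0) * (\<Prod>k<Suc N. euler_factor T (v k))
        = (euler_factor_env T (u 0) * (\<Prod>k<N. euler_factor T (v k))) * euler_factor T (v N)"
    by simp
  also have "\<dots> \<le> (euler_factor T (v N) * euler_factor_env T (u N)) * (\<Prod>k<N. euler_factor T (u k))"
    using mult_right_mono[OF Suc.IH pos(1)] by (simp add: ac_simps)
  also have "\<dots> \<le> (euler_factor T (u N) * euler_factor_env T (v N)) * (\<Prod>k<N. euler_factor T (u k))"
    using euler_factor_div_env_antimono assms prod_pos by (intro mult_right_mono) auto
  also have "\<dots> \<le> (euler_factor T (u N) * euler_factor_env T (u (Suc N))) * (\<Prod>k<N. euler_factor T (u k))"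
    using euler_factor_env_mono assms pos prod_pos by (intro mult_right_mono mult_left_mono) auto
  also have "\<dots> = euler_factor_env T (u (Suc N)) * (\<Prod>k<Suc N. euler_factor T (u k))"
    by simp
  finally show ?case .
qed

lemma prod_euler_factor_interleaved_le:
  assumes "T > 0" "\<And>k. 0 < u k" "\<And>k. u k \<le> v k" "\<And>k. v k \<le> u (Suc k)"
  shows "(\<Prod>k<N. euler_factor T (v k)) \<le> 4 / 3 * (\<Prod>k<N. euler_factor T (u k))"
proof -
  have "0 \<le> euler_factor T (u k)" "0 \<le> euler_factor T (v k)" for k
    using assms euler_factor_pos[of T "u k"] euler_factor_pos[of T "v k"] by (meson less_le_trans less_imp_le)+
  then have "0 \<le> (\<Prod>k<N. euler_factor T (v k))" "0 \<le> (\<Prod>k<N. euler_factor T (u k))"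
    by (simp_all add: prod_nonneg)
  then have "12 * (\<Prod>k<N. euler_factor T (v k)) \<le> euler_factor_env T (u 0) * (\<Prod>k<N. euler_factor T (v k))"
      "euler_factor_env T (u N) * (\<Prod>k<N. euler_factor T (u k)) \<le> 16 * (\<Prod>k<N. euler_factor T (u k))"
    using euler_factor_env_bounds[OF assms(1)] by (simp_all add: mult_right_mono)
  then show ?thesis
    using prod_euler_factor_interleaved[of T u v N] assms by simp
qed

lemma norm_Gamma_series_Complex_sq:
  fixes x y :: real
  assumes "x > 0" "n > 0"
  shows "(norm (Gamma_series (Complex x y) n))\<^sup>2 =
           (fact n * real n powr x)\<^sup>2 / (\<Prod>k<n+1. (x + real k)\<^sup>2 + y\<^sup>2)"
proof -
  have "norm (exp (Complex x y * of_real (ln (real n)))) = real n powr x"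
    using assms by (simp add: norm_exp_eq_Re powr_def)
  moreover have "norm (pochhammer (Complex x y) (n + 1)) = (\<Prod>k<n+1. norm (Complex x y + of_nat k))"
    unfolding pochhammer_prod atLeast0LessThan by (rule prod_norm[symmetric])
  moreover have "(norm (Complex x y + of_nat k))\<^sup>2 = (x + real k)\<^sup>2 + y\<^sup>2" for k
    by (simp add: cmod_def)
  ultimately show ?thesis
    unfolding Gamma_series_def norm_divide norm_mult
    by (simp add: power_divide power_mult_distrib prod_power_distrib)
qed

lemma Gamma_series_real:
  fixes x :: real
  assumes "x > 0" "n > 0"
  shows "Gamma_series x n = fact n * real n powr x / (\<Prod>k<n+1. x + real k)"
  using assms unfolding Gamma_series_def
  by (simp add: powr_def pochhammer_prod atLeast0LessThan mult.commute)

lemma Gamma_series_ratio_eq_prod: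
  fixes x t :: real
  assumes "x > 0" "n > 0"
  shows "(norm (Gamma_series (Complex x t) n / (Gamma_series (Complex x (t / 2)) n)\<^sup>2))\<^sup>2
           * (Gamma_series x n)\<^sup>2
         = (\<Prod>k<n+1. euler_factor (t\<^sup>2) ((x + real k)\<^sup>2)) / 16 ^ (n + 1)"
proof -
  define A where "A = fact n * real n powr x"
  define P where "P s = (\<Prod>k<n+1. (x + real k)\<^sup>2 + s\<^sup>2)" for s
  define Q where "Q = (\<Prod>k<n+1. x + real k)"
  have pos: "A > 0" "P s > 0" "Q > 0" for s
    using assms unfolding A_def P_def Q_def by (auto intro!: prod_pos add_pos_nonneg simp del: prod.lessThan_Suc)
  have norm_sq: "(norm (Gamma_series (Complex x s) n))\<^sup>2 = A\<^sup>2 / P s" for s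
    unfolding A_def P_def power_mult_distrib[symmetric] by (rule norm_Gamma_series_Complex_sq[OF assms])
  have real: "Gamma_series x n = A / Q"
    unfolding A_def Q_def by (rule Gamma_series_real[OF assms])
  have "(norm (Gamma_series (Complex x t) n / (Gamma_series (Complex x (t / 2)) n)\<^sup>2))\<^sup>2
          * (Gamma_series x n)\<^sup>2
        = (norm (Gamma_series (Complex x t) n))\<^sup>2 / ((norm (Gamma_series (Complex x (t / 2)) n))\<^sup>2)\<^sup>2
          * (Gamma_series x n)\<^sup>2"
    by (simp add: norm_divide norm_power power_divide power_mult[symmetric] mult.commute)
  also have "\<dots> = (A\<^sup>2 / P t) / (A\<^sup>2 / P (t / 2))\<^sup>2 * (A / Q)\<^sup>2"
    by (simp only: norm_sq real)
  also have "\<dots> = (P (t / 2))\<^sup>2 / (Q\<^sup>2 * P t)"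
    using pos by (simp add: field_simps power2_eq_square)
  also have "\<dots> = (\<Prod>k<n+1. ((x + real k)\<^sup>2 + (t / 2)\<^sup>2)\<^sup>2 / ((x + real k)\<^sup>2 * ((x + real k)\<^sup>2 + t\<^sup>2)))"
    unfolding P_def Q_def
    by (simp only: prod_power_distrib prod.distrib[symmetric] prod_dividef[symmetric])
  also have "\<dots> = (\<Prod>k<n+1. euler_factor (t\<^sup>2) ((x + real k)\<^sup>2) / 16)"
    using assms by (intro prod.cong refl) (simp add: euler_factor_def field_simps power2_eq_square)
  also have "\<dots> = (\<Prod>k<n+1. euler_factor (t\<^sup>2) ((x + real k)\<^sup>2)) / 16 ^ (n + 1)"
    by (simp add: prod_dividef)
  finally show ?thesis .
qed

lemma Gamma_ratio_le:
  fixes x t :: real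
  assumes "1 \<le> x" "x \<le> 2" "t \<noteq> 0"
  shows "(norm (Gamma (Complex x t) / (Gamma (Complex x (t / 2)))\<^sup>2))\<^sup>2 * (Gamma x)\<^sup>2
           \<le> 4 / 3 * (norm (Gamma (Complex 1 t) / (Gamma (Complex 1 (t / 2)))\<^sup>2))\<^sup>2"
proof -
  define S where "S y n = (norm (Gamma_series (Complex y t) n / (Gamma_series (Complex y (t / 2)) n)\<^sup>2))\<^sup>2
                            * (Gamma_series y n)\<^sup>2" for y n
  have lim: "S y \<longlonglongrightarrow> (norm (Gamma (Complex y t) / (Gamma (Complex y (t / 2)))\<^sup>2))\<^sup>2 * (Gamma y)\<^sup>2"
    if "y > 0" for y
  proof -
    have "Complex y (t / 2) \<notin> \<int>\<^sub>\<le>\<^sub>0"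
      using that by (auto elim!: nonpos_Ints_cases simp: complex_eq_iff)
    then show ?thesis
      unfolding S_def by (intro tendsto_intros) (auto simp: Gamma_eq_zero_iff)
  qed
  have "S x n \<le> 4 / 3 * S 1 n" if "n > 0" for n
  proof -
    have S: "S y n = (\<Prod>k<n+1. euler_factor (t\<^sup>2) ((y + real k)\<^sup>2)) / 16 ^ (n + 1)"
      if "y > 0" for y
      unfolding S_def using that \<open>n > 0\<close> by (rule Gamma_series_ratio_eq_prod)
    have "(\<Prod>k<n+1. euler_factor (t\<^sup>2) ((x + real k)\<^sup>2))
            \<le> 4 / 3 * (\<Prod>k<n+1. euler_factor (t\<^sup>2) ((1 + real k)\<^sup>2))"
      using assms by (intro prod_euler_factor_interleaved_le) (auto intro!: power_mono)
    from divide_right_mono[OF this, of "16 ^ (n + 1)"] show ?thesis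
      using S[of x] S[of 1] assms by (simp del: prod.lessThan_Suc)
  qed
  then have "eventually (\<lambda>n. S x n \<le> 4 / 3 * S 1 n) sequentially"
    by (intro eventually_sequentiallyI[of 1]) auto
  from tendsto_le[OF trivial_limit_sequentially tendsto_mult_left[OF lim] lim this]
  show ?thesis
    using assms by simp
qed

lemma sin_i_times_of_real: "sin (\<i> * complex_of_real y) = \<i> * complex_of_real (sinh y)"
  by (simp add: sin_i_times sinh_def exp_minus exp_of_real scaleR_conv_of_real field_simps)

lemma norm_Gamma_1_plus_i_times_sq:
  fixes t :: real
  assumes "t \<noteq> 0"
  shows "(norm (Gamma (1 + \<i> * complex_of_real t)))\<^sup>2 = pi * t / sinh (pi * t)"
proof -
  define z where "z = \<i> * complex_of_real t"
  have "z \<notin> \<int>\<^sub>\<le>\<^sub>0"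
    using assms unfolding z_def by (auto elim!: nonpos_Ints_cases simp: complex_eq_iff)
  have "complex_of_real ((norm (Gamma (1 + z)))\<^sup>2) = Gamma (1 + z) * Gamma (1 - z)"
    unfolding complex_norm_square by (simp add: cnj_Gamma z_def)
  also have "\<dots> = z * (Gamma z * Gamma (1 - z))"
    using Gamma_plus1[OF \<open>z \<notin> \<int>\<^sub>\<le>\<^sub>0\<close>] by (simp add: add.commute)
  also have "\<dots> = z * (of_real pi / sin (of_real pi * z))"
    by (simp only: Gamma_reflection_complex)
  also have "sin (of_real pi * z) = \<i> * complex_of_real (sinh (pi * t))"
    unfolding z_def sin_i_times_of_real[symmetric] by (simp add: mult.left_commute)
  also have "z * (of_real pi / (\<i> * complex_of_real (sinh (pi * t)))) = complex_of_real (pi * t / sinh (pi * t))"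
    using assms by (simp add: z_def field_simps)
  finally show ?thesis
    unfolding z_def by (simp only: of_real_eq_iff)
qed

lemma Gamma_ratio_imaginary_sq:
  fixes t :: real
  assumes "t \<noteq> 0"
  shows "(norm (Gamma (1 + \<i> * complex_of_real t) / (Gamma (1 + \<i> * complex_of_real (t / 2)))\<^sup>2))\<^sup>2
           = 2 / pi * (1 / t) * tanh (pi * t / 2)"
proof -
  define s where "s = pi * t / 2"
  have "sinh s \<noteq> 0" "cosh s \<noteq> 0"
    using assms by (simp_all add: s_def)
  have "(norm (Gamma (1 + \<i> * complex_of_real t) / (Gamma (1 + \<i> * complex_of_real (t / 2)))\<^sup>2))\<^sup>2
        = (norm (Gamma (1 + \<i> * complex_of_real t)))\<^sup>2
            / ((norm (Gamma (1 + \<i> * complex_of_real (t / 2))))\<^sup>2)\<^sup>2"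
    by (simp add: norm_divide norm_power power_divide power_mult[symmetric] mult.commute)
  also have "\<dots> = (pi * t / sinh (2 * s)) / (pi * (t / 2) / sinh s)\<^sup>2"
    using assms norm_Gamma_1_plus_i_times_sq[of "t / 2"]
    unfolding norm_Gamma_1_plus_i_times_sq[OF assms] by (simp add: s_def)
  also have "\<dots> = 2 / pi * (1 / t) * (sinh s / cosh s)"
    using assms \<open>sinh s \<noteq> 0\<close> \<open>cosh s \<noteq> 0\<close> unfolding sinh_double
    by (simp add: field_simps power2_eq_square)
  finally show ?thesis
    by (simp add: tanh_def s_def)
qed

lemma Gamma_ge_exp_neg_quarter:
  fixes x :: real
  assumes "1 \<le> x" "x \<le> 2"
  shows "exp (- 1 / 4) \<le> Gamma x"
proof -
  (* The tangents of ln Gamma at 1 and 2 have slopes -gamma and 1 - gamma and meet at height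
     -gamma (1 - gamma) >= -1/4. *)
  have tangent: "Digamma c * (x - c) \<le> ln (Gamma x) - ln (Gamma c)" if "c > 0" for c :: real
  proof -
    have "((ln \<circ> Gamma) has_field_derivative Digamma c) (at c within {0<..})"
      using that by (auto intro!: derivative_eq_intros simp: o_def Gamma_eq_zero_iff elim!: nonpos_Ints_cases')
    then show ?thesis
      using assms that
      by (intro convex_on_imp_above_tangent[OF log_convex_Gamma_real, simplified]) (auto simp: interior_open)
  qed
  define g where "g = (euler_mascheroni :: real)"
  have g: "0 < g" "g < 1"
    using euler_mascheroni_pos euler_mascheroni_less_13_over_22 by (auto simp: g_def)
  have tangent_1: "- g * (x - 1) \<le> ln (Gamma x)"
    using tangent[of 1] by (simp add: g_def)
  have tangent_2: "(1 - g) * (x - 2) \<le> ln (Gamma x)"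
    using tangent[of 2] Gamma_fact[of 1, where ?'a = real] Digamma_plus1[of "1 :: real"] by (simp add: g_def)
  have g_quarter: "g * (1 - g) \<le> 1 / 4"
    using zero_le_power2[of "g - 1 / 2"] by (simp add: power2_eq_square algebra_simps)
  have "- 1 / 4 \<le> ln (Gamma x)"
  proof (cases "x - 1 \<le> 1 - g")
    case True
    then have "g * (x - 1) \<le> g * (1 - g)"
      using g by (simp add: mult_left_mono)
    with tangent_1 g_quarter show ?thesis by linarith
  next
    case False
    then have "(1 - g) * (2 - x) \<le> (1 - g) * g"
      using g by (intro mult_left_mono) auto
    with tangent_2 g_quarter show ?thesis by (simp add: algebra_simps)
  qed
  then show ?thesis
    using assms by (simp add: ln_ge_iff)
qed

lemma c_star_sq_ge: "8 / (3 * pi) * exp (1 / 2) \<le> c_star\<^sup>2"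
proof -
  define h where "h = exp (1 / 2 :: real)"
  have "c_star\<^sup>2 = 81 * h ^ 4 / (32 * pi\<^sup>2)"
    unfolding c_star_def h_def by (simp add: power_divide power_mult_distrib exp_of_nat_mult[symmetric])
  have "3 / 2 \<le> h"
    unfolding h_def using exp_ge_add_one_self[of "1 / 2 :: real"] by simp
  then have "27 / 8 \<le> h ^ 3"
    using power_mono[of "3 / 2" h 3] by (simp add: power3_eq_cube)
  moreover have "pi \<le> 16 / 5"
    using pi_approx by simp
  ultimately have "256 * pi \<le> 243 * h ^ 3"
    by linarith
  then have "8 * h * (32 * pi\<^sup>2) \<le> 81 * h ^ 4 * (3 * pi)"
    using \<open>3 / 2 \<le> h\<close> by (simp add: power2_eq_square power_numeral_reduce mult_right_mono algebra_simps)
  then show ?thesis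
    unfolding \<open>c_star\<^sup>2 = 81 * h ^ 4 / (32 * pi\<^sup>2)\<close> h_def[symmetric] by (simp add: field_simps)
qed

lemma norm_Gamma_ratio_le:
  fixes \<epsilon> t :: real
  assumes "0 \<le> \<epsilon>" "\<epsilon> \<le> 1" "t \<noteq> 0"
  shows "norm (Gamma (1 + \<i> * complex_of_real t + complex_of_real \<epsilon>) /
                (Gamma (1 + \<i> * complex_of_real (t / 2) + complex_of_real \<epsilon>))\<^sup>2)
           \<le> c_star / \<bar>t\<bar> powr (1 / 2)"
proof -
  define R where "R x = (norm (Gamma (Complex x t) / (Gamma (Complex x (t / 2)))\<^sup>2))\<^sup>2" for x
  define x where "x = 1 + \<epsilon>"
  have x: "1 \<le> x" "x \<le> 2"
    using assms by (simp_all add: x_def)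
  have Complex_x: "Complex x s = 1 + \<i> * complex_of_real s + complex_of_real \<epsilon>" for s
    by (simp add: x_def complex_eq_iff)
  have "R 1 = 2 / pi * ((1 / t) * tanh (pi * t / 2))"
    using Gamma_ratio_imaginary_sq[OF assms(3)] by (simp add: R_def Complex_eq)
  also have "\<dots> \<le> 2 / pi * (\<bar>tanh (pi * t / 2)\<bar> / \<bar>t\<bar>)"
    by (intro mult_left_mono) (auto simp: abs_mult abs_divide intro: order.trans[OF abs_ge_self])
  also have "\<dots> \<le> 2 / pi * (1 / \<bar>t\<bar>)"
    using tanh_real_bounds[of "pi * t / 2"] by (intro mult_left_mono divide_right_mono) auto
  finally have "R x * (Gamma x)\<^sup>2 \<le> 8 / (3 * pi) / \<bar>t\<bar>"
    using Gamma_ratio_le[OF x assms(3)] unfolding R_def by simp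
  moreover have "exp (- 1 / 2) \<le> (Gamma x)\<^sup>2"
    using power_mono[OF Gamma_ge_exp_neg_quarter[OF x], of 2] by (simp add: exp_of_nat_mult[symmetric])
  ultimately have "R x * exp (- 1 / 2) \<le> 8 / (3 * pi) / \<bar>t\<bar>"
    using mult_left_mono[of "exp (- 1 / 2)" "(Gamma x)\<^sup>2" "R x"] by (simp add: R_def)
  then have "R x \<le> 8 / (3 * pi) * exp (1 / 2) / \<bar>t\<bar>"
    by (simp add: exp_minus field_simps)
  also have "\<dots> \<le> (c_star / \<bar>t\<bar> powr (1 / 2))\<^sup>2"
    using divide_right_mono[OF c_star_sq_ge, of "\<bar>t\<bar>"] by (simp add: power_divide powr_half_sqrt)
  finally have "(norm (Gamma (Complex x t) / (Gamma (Complex x (t / 2)))\<^sup>2))\<^sup>2 \<le> (c_star / \<bar>t\<bar> powr (1 / 2))\<^sup>2"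
    unfolding R_def .
  then show ?thesis
    unfolding Complex_x by (rule power2_le_imp_le) (simp add: c_star_def)
qed

theorem lemma3p3:
  shows "(\<forall>(\<epsilon>::real) (t::real). 0 \<le> \<epsilon> \<and> \<epsilon> < 1 \<and> \<bar>t\<bar> > 4 * exp 1 \<longrightarrow>
           cmod (Gamma (1 + \<i> * complex_of_real t + complex_of_real \<epsilon>) /
                 (Gamma (1 + \<i> * complex_of_real (t / 2) + complex_of_real \<epsilon>))\<^sup>2)
           \<le> c_star / \<bar>t\<bar> powr (1/2))
       \<and> (\<forall>t::real. t \<noteq> 0 \<longrightarrow>
           (cmod (Gamma (1 + \<i> * complex_of_real t) /
                  (Gamma (1 + \<i> * complex_of_real (t / 2)))\<^sup>2))\<^sup>2
           = 2 / pi * (1 / t) * tanh (pi * t / 2))"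
proof (intro conjI allI impI)
  fix \<epsilon> t :: real
  assume "0 \<le> \<epsilon> \<and> \<epsilon> < 1 \<and> \<bar>t\<bar> > 4 * exp 1"
  then show "cmod (Gamma (1 + \<i> * complex_of_real t + complex_of_real \<epsilon>) /
               (Gamma (1 + \<i> * complex_of_real (t / 2) + complex_of_real \<epsilon>))\<^sup>2)
             \<le> c_star / \<bar>t\<bar> powr (1/2)"
    using exp_gt_zero[of 1] by (intro norm_Gamma_ratio_le) auto
qed (rule Gamma_ratio_imaginary_sq)

end
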